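(* Fix an integer $c$ and a real number $\alpha>0$. Then for all sufficiently large $n$ the following holds, with $h=\left\lfloor\frac{n+c}{12e\alpha}\right\rfloor$ and $w=\frac{n+c}{\alpha}$: if $v_1<\cdots<v_n$ are positive real numbers satisfying $v_{i+h}\ge w v_i$ for every $1\le i\le n-h$, then $\mathrm{ML}(v_1,\ldots,v_n)>\frac{\alpha}{n+c}$.
   Context: For a real number $x$, $\Vert x\Vert$ denotes the distance from $x$ to the nearest integer. For positive real numbers $v_1,\ldots,v_n$, the maximum loneliness is $\mathrm{ML}(v_1,\ldots,v_n)=\sup_{t\in\mathbb{R}}\min_{1\le i\le n}\Vert t v_i\Vert$. Here $e$ is the base of the natural logarithm. *)

theory Defs
  imports "HOL-Analysis.Analysis"
begin

definition dist_nint :: "real \<Rightarrow> real" where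
  "dist_nint x = (INF k::int. \<bar>x - real_of_int k\<bar>)"

definition max_loneliness :: "nat \<Rightarrow> (nat \<Rightarrow> real) \<Rightarrow> real" where
  "max_loneliness n v = (SUP t::real. Min ((\<lambda>i. dist_nint (t * v i)) ` {1..n}))"

end

(*
  Write \<delta> = 1/w and sample t on a fine grid t = j * s. For every speed v k choose a dyadic
  block length q k such that t * v k moves by an amount in (\<delta>/16, \<delta>/8] while j runs through
  a block of q k consecutive grid points; since q k decreases with k and all q k are powers of 2,
  every block of level i is a union of blocks of any level k \<ge> i. At step k discard the grid
  points lying in a level-k block along which t * v k comes within \<delta> of an integer.

  The survivors of step k - 2h are a union of level-(k - 2h) blocks, and as v k \<ge> w\<^sup>2 v (k - 2h)
  each such block contains so many level-k blocks that at most a fraction 3\<delta> of them is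
  discarded. Charging the loss of step k to the survivors of step k - 2h, and using that over the
  2h - 1 intermediate steps the survivors shrink by at most half, each step keeps a fraction
  1 - 1/(4h) of the points because 24h \<le> w. So some grid point survives all n steps.
*)

theory Submission
  imports Defs
begin

lemma dist_nint_eq_round: "dist_nint x = \<bar>x - of_int (round x)\<bar>"
  unfolding dist_nint_def by (rule cInf_eq_minimum) (auto simp: round_diff_minimal)

lemma dist_nint_le_half: "dist_nint x \<le> 1 / 2"
  unfolding dist_nint_eq_round using of_int_round_ge[of x] of_int_round_le[of x] by linarith

lemma max_loneliness_gt:
  assumes "1 \<le> n" and far: "\<And>i m. i \<in> {1..n} \<Longrightarrow> d < \<bar>t * v i - of_int m\<bar>"
  shows "d < max_loneliness n v"
proof -
  define f where "f t = Min ((\<lambda>i. dist_nint (t * v i)) ` {1..n})" for t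
  have "f t' \<le> 1 / 2" for t'
  proof -
    have "f t' \<le> dist_nint (t' * v 1)"
      unfolding f_def using \<open>1 \<le> n\<close> by (intro Min_le) auto
    then show ?thesis
      using dist_nint_le_half[of "t' * v 1"] by linarith
  qed
  then have "f t \<le> (SUP t. f t)"
    by (intro cSUP_upper bdd_aboveI2[where M = "1 / 2"]) auto
  moreover have "d < f t"
    using \<open>1 \<le> n\<close> far unfolding f_def dist_nint_eq_round by (subst Min_gr_iff) auto
  ultimately show ?thesis
    unfolding max_loneliness_def f_def by linarith
qed

lemma div_eq_iff_between:
  fixes j q b :: nat
  assumes "0 < q"
  shows "j div q = b \<longleftrightarrow> b * q \<le> j \<and> j < b * q + q"
proof -
  have "j div q = b \<longleftrightarrow> b \<le> j div q \<and> j div q < Suc b"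
    by linarith
  then show ?thesis
    using assms by (simp add: less_eq_div_iff_mult_less_eq div_less_iff_less_mult add.commute)
qed

lemma card_div_fibre:
  assumes "0 < q"
  shows "card {j::nat. j div q = b} = q"
proof -
  have "{j::nat. j div q = b} = {b * q..<b * q + q}"
    by (auto simp: div_eq_iff_between[OF assms])
  then show ?thesis
    by simp
qed

lemma card_div_preimage:
  assumes "0 < q" and "finite B"
  shows "card {j::nat. j div q \<in> B} = q * card B"
proof -
  have "{j. j div q \<in> B} = (\<Union>b\<in>B. {j. j div q = b})"
    by auto
  also have "card \<dots> = (\<Sum>b\<in>B. card {j. j div q = b})"
    using assms card_div_fibre[of q] by (intro card_UN_disjoint) (auto intro: card_ge_0_finite)
  finally show ?thesis
    using assms by (simp add: card_div_fibre)
qed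

lemma div_eq_div_of_dvd:
  fixes j j' q Q :: nat
  assumes "q dvd Q" and "j' div q = j div q"
  shows "j' div Q = j div Q"
proof -
  obtain c where "Q = q * c"
    using assms(1) by (rule dvdE)
  then show ?thesis
    using assms(2) by (simp add: div_mult2_eq)
qed

lemma card_inter_le_of_sparse_cells:
  fixes S Bad :: "nat set"
  assumes "0 < q" and "finite S"
    and saturated: "\<And>j j'. j \<in> S \<Longrightarrow> j' div q = j div q \<Longrightarrow> j' \<in> S"
    and sparse: "\<And>b. real (card ({j. j div q = b} \<inter> Bad)) \<le> \<rho> * real q"
  shows "real (card (S \<inter> Bad)) \<le> \<rho> * real (card S)"
proof -
  define Bs where "Bs = (\<lambda>j. j div q) ` S"
  have fin: "finite Bs"
    using assms by (simp add: Bs_def)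
  have S_eq: "S = {j. j div q \<in> Bs}"
    using saturated by (auto simp: Bs_def)
  have "S \<inter> Bad = (\<Union>b\<in>Bs. {j. j div q = b} \<inter> Bad)"
    by (subst S_eq) auto
  then have "card (S \<inter> Bad) \<le> (\<Sum>b\<in>Bs. card ({j. j div q = b} \<inter> Bad))"
    by (simp only:) (rule card_UN_le[OF fin])
  then have "real (card (S \<inter> Bad)) \<le> (\<Sum>b\<in>Bs. real (card ({j. j div q = b} \<inter> Bad)))"
    unfolding of_nat_sum[symmetric] of_nat_le_iff .
  also have "\<dots> \<le> (\<Sum>b\<in>Bs. \<rho> * real q)"
    by (intro sum_mono sparse)
  also have "\<dots> = \<rho> * card S"
    using card_div_preimage[OF \<open>0 < q\<close> fin] S_eq by simp
  finally show ?thesis .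
qed

lemma finite_int_between: "finite {m::int. x \<le> m \<and> m \<le> (y::real)}"
  by (rule finite_subset[of _ "{\<lceil>x\<rceil>..\<lfloor>y\<rfloor>}"]) (auto simp: ceiling_le_iff le_floor_iff)

lemma finite_nat_between: "finite {b::nat. x \<le> b \<and> b \<le> (y::real)}"
proof (rule finite_imageD)
  show "finite (int ` {b::nat. x \<le> b \<and> b \<le> y})"
    by (rule finite_subset[OF _ finite_int_between[of x y]]) auto
qed (simp add: inj_on_def)

lemma card_int_between:
  fixes x y :: real
  assumes "x \<le> y + 1"
  shows "real (card {m::int. x \<le> m \<and> m \<le> y}) \<le> y - x + 1"
proof -
  have "{m::int. x \<le> m \<and> m \<le> y} = {\<lceil>x\<rceil>..\<lfloor>y\<rfloor>}"
    by (auto simp: ceiling_le_iff le_floor_iff)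
  then have "card {m::int. x \<le> m \<and> m \<le> y} = nat (\<lfloor>y\<rfloor> - \<lceil>x\<rceil> + 1)"
    by simp
  moreover have "real_of_int \<lfloor>y\<rfloor> - real_of_int \<lceil>x\<rceil> \<le> y - x"
    using of_int_floor_le[of y] le_of_int_ceiling[of x] by linarith
  ultimately show ?thesis
    using assms by (cases "\<lceil>x\<rceil> \<le> \<lfloor>y\<rfloor> + 1") auto
qed

lemma card_nat_between:
  fixes x y :: real
  assumes "x \<le> y + 1"
  shows "real (card {b::nat. x \<le> b \<and> b \<le> y}) \<le> y - x + 1"
proof -
  have "int ` {b::nat. x \<le> b \<and> b \<le> y} \<subseteq> {m::int. x \<le> m \<and> m \<le> y}"
    by auto
  then have "card {b::nat. x \<le> b \<and> b \<le> y} \<le> card {m::int. x \<le> m \<and> m \<le> y}"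
    using finite_int_between by (metis card_image card_mono inj_on_of_nat)
  then show ?thesis
    using card_int_between[OF assms] by linarith
qed

definition meets_int_nbhd :: "real \<Rightarrow> real \<Rightarrow> real \<Rightarrow> bool" where
  "meets_int_nbhd d x y \<longleftrightarrow> (\<exists>m::int. m - d \<le> y \<and> x \<le> m + d)"

lemma card_blocks_meeting_int_nbhd:
  fixes l d :: real and a r :: nat
  assumes "0 < l" and "0 \<le> d"
  shows "real (card {b. a \<le> b \<and> b < a + r \<and> meets_int_nbhd d (real b * l) ((real b + 1) * l)})
    \<le> (r * l + 2 * d + 1) * (2 * d / l + 2)"
proof -
  define M where "M = {m::int. a * l - d \<le> m \<and> m \<le> (a + r) * l + d}"
  define I where "I m = {b::nat. (m - d) / l - 1 \<le> b \<and> b \<le> (m + d) / l}" for m :: int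
  have "b \<in> (\<Union>m\<in>M. I m)"
    if range: "a \<le> b" "b < a + r" and near: "meets_int_nbhd d (real b * l) ((real b + 1) * l)" for b
  proof -
    obtain z :: int where z: "z - d \<le> (real b + 1) * l" "real b * l \<le> z + d"
      using near unfolding meets_int_nbhd_def by blast
    have "real a * l \<le> real b * l" "(real b + 1) * l \<le> (real a + real r) * l"
      using range assms(1) by (intro mult_right_mono; simp)+
    then have "z \<in> M"
      unfolding M_def using z by (simp only: mem_Collect_eq of_nat_add) linarith
    moreover have "b \<in> I z"
      unfolding I_def using z assms(1) by (simp add: field_simps)
    ultimately show ?thesis
      by blast
  qed
  then have "{b. a \<le> b \<and> b < a + r \<and> meets_int_nbhd d (real b * l) ((real b + 1) * l)} \<subseteq> (\<Union>m\<in>M. I m)"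
    by blast
  moreover have "finite M"
    unfolding M_def by (rule finite_int_between)
  moreover have "finite (I m)" for m
    unfolding I_def by (rule finite_nat_between)
  ultimately have "card {b. a \<le> b \<and> b < a + r \<and> meets_int_nbhd d (real b * l) ((real b + 1) * l)}
      \<le> card (\<Union>m\<in>M. I m)"
    by (intro card_mono) auto
  also have "\<dots> \<le> (\<Sum>m\<in>M. card (I m))"
    using \<open>finite M\<close> by (rule card_UN_le)
  finally have "real (card {b. a \<le> b \<and> b < a + r \<and> meets_int_nbhd d (real b * l) ((real b + 1) * l)})
      \<le> (\<Sum>m\<in>M. real (card (I m)))"
    unfolding of_nat_sum[symmetric] of_nat_le_iff .
  also have "\<dots> \<le> (\<Sum>m\<in>M. 2 * d / l + 2)"
  proof (rule sum_mono)
    fix m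
    have "real (card (I m)) \<le> (m + d) / l - ((m - d) / l - 1) + 1"
      unfolding I_def using assms by (intro card_nat_between) (auto simp: field_simps)
    also have "\<dots> = 2 * d / l + 2"
      using assms(1) by (simp add: field_simps)
    finally show "real (card (I m)) \<le> 2 * d / l + 2" .
  qed
  also have "\<dots> = real (card M) * (2 * d / l + 2)"
    by simp
  also have "\<dots> \<le> (r * l + 2 * d + 1) * (2 * d / l + 2)"
  proof (rule mult_right_mono)
    show "real (card M) \<le> r * l + 2 * d + 1"
      using card_int_between[of "a * l - d" "(a + r) * l + d"] assms
      unfolding M_def by (simp add: algebra_simps)
  qed (use assms in simp)
  finally show ?thesis .
qed

lemma card_blocks_meeting_int_nbhd_le:
  fixes l d :: real and a r :: nat
  assumes "0 < l" and "8 * l \<le> d" and "16 \<le> r * l" and "d \<le> 1 / 2"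
  shows "real (card {b. a \<le> b \<and> b < a + r \<and> meets_int_nbhd d (real b * l) ((real b + 1) * l)})
    \<le> 3 * d * r"
proof -
  have "8 * (l * (r * l)) \<le> d * (r * l)"
    using mult_right_mono[of "8 * l" d "r * l"] assms by simp
  moreover have "(2 * d + 1) * (2 * d + 2 * l) \<le> 4 * d + 4 * l"
    using mult_right_mono[of "2 * d + 1" 2 "2 * d + 2 * l"] assms by simp
  moreover have "16 * d \<le> d * (r * l)"
    using mult_left_mono[of 16 "r * l" d] assms by (simp add: mult.commute)
  moreover have "(r * l + 2 * d + 1) * (2 * d + 2 * l)
      = 2 * (d * (r * l)) + 2 * (l * (r * l)) + (2 * d + 1) * (2 * d + 2 * l)"
    by (simp add: algebra_simps)
  ultimately have "(r * l + 2 * d + 1) * (2 * d + 2 * l) \<le> 3 * (d * (r * l))"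
    using assms by linarith
  then have "(r * l + 2 * d + 1) * (2 * d / l + 2) \<le> 3 * d * r"
    using assms(1) by (simp add: field_simps)
  then show ?thesis
    using card_blocks_meeting_int_nbhd[of l d a r] assms by linarith
qed

lemma linear_decay_of_ratio_bound:
  fixes a :: "nat \<Rightarrow> real"
  assumes "k0 \<le> k" and "0 \<le> x"
    and ratio: "\<And>m. k0 < m \<Longrightarrow> m \<le> k \<Longrightarrow> (1 - x) * a (m - 1) \<le> a m"
    and below: "\<And>m. k0 \<le> m \<Longrightarrow> m \<le> k \<Longrightarrow> a m \<le> a k0"
  shows "(1 - (real k - real k0) * x) * a k0 \<le> a k"
  using assms(1) ratio below
proof (induction k rule: dec_induct)
  case base
  then show ?case by simp
next
  case (step k)
  have "(1 - (real k - real k0) * x) * a k0 \<le> a k"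
    using step by simp
  moreover have "(1 - x) * a k \<le> a (Suc k)"
    using step.prems(1)[of "Suc k"] step.hyps by simp
  moreover have "x * a k \<le> x * a k0"
    using step.prems(2)[of k] step.hyps \<open>0 \<le> x\<close> by (intro mult_left_mono) auto
  ultimately show ?case
    by (simp add: algebra_simps)
qed

lemma delayed_loss_ratio:
  fixes a :: "nat \<Rightarrow> real" and \<rho> :: real and D n :: nat
  assumes "1 \<le> D" and "0 \<le> \<rho>" and "4 * \<rho> * D \<le> 1"
    and nonneg: "\<And>k. k \<le> n \<Longrightarrow> 0 \<le> a k"
    and antimono: "\<And>i k. i \<le> k \<Longrightarrow> k \<le> n \<Longrightarrow> a k \<le> a i"
    and loss: "\<And>k. 1 \<le> k \<Longrightarrow> k \<le> n \<Longrightarrow> a (k - 1) - a k \<le> \<rho> * a (k - D)"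
  shows "1 \<le> k \<Longrightarrow> k \<le> n \<Longrightarrow> (1 - 1 / (2 * real D)) * a (k - 1) \<le> a k"
proof (induction k rule: less_induct)
  case (less k)
  define x where "x = 1 / (2 * real D)"
  define k0 where "k0 = k - D"
  have "(1 - (real (k - 1) - real k0) * x) * a k0 \<le> a (k - 1)"
  proof (rule linear_decay_of_ratio_bound[where a = a])
    show "k0 \<le> k - 1" "0 \<le> x"
      using \<open>1 \<le> D\<close> by (auto simp: k0_def x_def)
    show "(1 - x) * a (m - 1) \<le> a m" if "k0 < m" "m \<le> k - 1" for m
      using less that by (auto simp: x_def)
    show "a m \<le> a k0" if "k0 \<le> m" "m \<le> k - 1" for m
      using antimono less.prems that by simp
  qed
  moreover have "(real (k - 1) - real k0) * x \<le> 1 / 2"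
    using \<open>1 \<le> D\<close> by (simp add: k0_def x_def field_simps)
  then have "1 / 2 * a k0 \<le> (1 - (real (k - 1) - real k0) * x) * a k0"
    using nonneg[of k0] less.prems by (intro mult_right_mono) (auto simp: k0_def)
  \<comment> \<open>fewer than D steps lead from k0 to k - 1, each losing at most a fraction 1/(2D) of a k0\<close>
  ultimately have "a k0 \<le> 2 * a (k - 1)"
    by linarith
  then have "a (k - 1) - a k \<le> 2 * \<rho> * a (k - 1)"
    using loss[OF less.prems] \<open>0 \<le> \<rho>\<close> mult_left_mono[of "a k0" "2 * a (k - 1)" \<rho>]
    by (simp add: k0_def)
  moreover have "2 * \<rho> * a (k - 1) \<le> x * a (k - 1)"
    using assms(1-3) nonneg[of "k - 1"] less.prems
    by (intro mult_right_mono) (auto simp: x_def field_simps)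
  ultimately show ?case
    by (simp add: x_def algebra_simps)
qed

lemma delayed_loss_geometric_decay:
  fixes a :: "nat \<Rightarrow> real" and \<rho> :: real and D n :: nat
  assumes "1 \<le> D" and "0 \<le> \<rho>" and "4 * \<rho> * D \<le> 1"
    and "\<And>k. k \<le> n \<Longrightarrow> 0 \<le> a k"
    and "\<And>i k. i \<le> k \<Longrightarrow> k \<le> n \<Longrightarrow> a k \<le> a i"
    and "\<And>k. 1 \<le> k \<Longrightarrow> k \<le> n \<Longrightarrow> a (k - 1) - a k \<le> \<rho> * a (k - D)"
  shows "k \<le> n \<Longrightarrow> (1 - 1 / (2 * real D)) ^ k * a 0 \<le> a k"
proof (induction k)
  case 0
  then show ?case by simp
next
  case (Suc k)
  have "0 \<le> 1 - 1 / (2 * real D)"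
    using \<open>1 \<le> D\<close> by (simp add: field_simps)
  then have "(1 - 1 / (2 * real D)) ^ Suc k * a 0 \<le> (1 - 1 / (2 * real D)) * a k"
    using Suc by (simp add: mult.assoc mult_left_mono)
  also have "\<dots> \<le> a (Suc k)"
    using delayed_loss_ratio[OF assms, where k = "Suc k"] Suc.prems by simp
  finally show ?case .
qed

lemma floor_log2_bounds:
  fixes y :: real
  assumes "1 \<le> y"
  shows "2 ^ nat \<lfloor>log 2 y\<rfloor> \<le> y" and "y < 2 ^ (nat \<lfloor>log 2 y\<rfloor> + 1)"
proof -
  have "real_of_int \<lfloor>log 2 y\<rfloor> = real (nat \<lfloor>log 2 y\<rfloor>)"
    using assms by simp
  then have "2 powr \<lfloor>log 2 y\<rfloor> = 2 ^ nat \<lfloor>log 2 y\<rfloor>"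
    by (simp add: powr_realpow)
  moreover have "2 powr \<lfloor>log 2 y\<rfloor> \<le> y \<and> y < 2 powr \<lfloor>log 2 y\<rfloor> * 2"
    using assms floor_log_eq_powr_iff[of y 2 "\<lfloor>log 2 y\<rfloor>"] by (simp add: powr_add)
  ultimately show "2 ^ nat \<lfloor>log 2 y\<rfloor> \<le> y" and "y < 2 ^ (nat \<lfloor>log 2 y\<rfloor> + 1)"
    by simp_all
qed

locale lacunary_speeds =
  fixes n D :: nat and u :: "nat \<Rightarrow> real" and \<delta> :: real
  assumes n_pos: "1 \<le> n" and D_pos: "1 \<le> D" and \<delta>_pos: "0 < \<delta>" and \<delta>_D: "12 * \<delta> * D \<le> 1"
    and u_pos: "\<And>k. 1 \<le> k \<Longrightarrow> k \<le> n \<Longrightarrow> 0 < u k"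
    and u_mono: "\<And>i k. 1 \<le> i \<Longrightarrow> i \<le> k \<Longrightarrow> k \<le> n \<Longrightarrow> u i \<le> u k"
    and u_lacunary: "\<And>k. D < k \<Longrightarrow> k \<le> n \<Longrightarrow> 256 * u (k - D) \<le> \<delta> * u k"
begin

text \<open>Level 0 is a fictitious speed below all others. Its block is the whole grid, which makes
  the lacunarity condition hold in the form of \<open>speed_lacunary\<close> for every level k \<ge> 1,
  including k \<le> D where the truncated index k - D is 0.\<close>

definition speed :: "nat \<Rightarrow> real" where
  "speed k = (if k = 0 then \<delta> * u 1 / 256 else u k)"

definition tick :: real where
  "tick = \<delta> / (8 * u n)"

definition level_exp :: "nat \<Rightarrow> nat" where
  "level_exp k = nat \<lfloor>log 2 (u n / speed k)\<rfloor>"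

definition block :: "nat \<Rightarrow> nat" where
  "block k = 2 ^ level_exp k"

definition arc :: "nat \<Rightarrow> real" where
  "arc k = block k * tick * speed k"

definition bad :: "nat \<Rightarrow> nat \<Rightarrow> bool" where
  "bad k b \<longleftrightarrow> meets_int_nbhd \<delta> (real b * arc k) ((real b + 1) * arc k)"

definition survivors :: "nat \<Rightarrow> nat set" where
  "survivors k = {j. j < block 0 \<and> (\<forall>i\<in>{1..k}. \<not> bad i (j div block i))}"

lemma \<delta>_small: "\<delta> \<le> 1 / 12"
proof -
  have "1 \<le> real D"
    using D_pos by simp
  then have "12 * \<delta> * 1 \<le> 12 * \<delta> * real D"
    using \<delta>_pos by (intro mult_left_mono) auto
  then show ?thesis
    using \<delta>_D by linarith
qed

lemma u_n_pos: "0 < u n"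
  using u_pos n_pos by simp

lemma speed_pos: "k \<le> n \<Longrightarrow> 0 < speed k"
  using u_pos[of 1] u_pos[of k] n_pos \<delta>_pos by (auto simp: speed_def)

lemma speed_mono: "i \<le> k \<Longrightarrow> k \<le> n \<Longrightarrow> speed i \<le> speed k"
proof -
  assume "i \<le> k" "k \<le> n"
  have "\<delta> * u 1 / 256 \<le> u 1"
    using \<delta>_small u_pos[of 1] n_pos mult_right_mono[of \<delta> 256 "u 1"] by simp
  moreover have "u 1 \<le> u k" if "1 \<le> k"
    using u_mono[of 1 k] that \<open>k \<le> n\<close> by simp
  ultimately show "speed i \<le> speed k"
    using u_mono[of i k] \<open>i \<le> k\<close> \<open>k \<le> n\<close> by (auto simp: speed_def)
qed

lemma speed_lacunary: "1 \<le> k \<Longrightarrow> k \<le> n \<Longrightarrow> 256 * speed (k - D) \<le> \<delta> * speed k"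
  using u_lacunary[of k] u_mono[of 1 k] \<delta>_pos by (cases "D < k") (auto simp: speed_def)

lemma level_exp_bounds:
  assumes "k \<le> n"
  shows "2 ^ level_exp k \<le> u n / speed k" and "u n / speed k < 2 ^ (level_exp k + 1)"
proof -
  have "1 \<le> u n / speed k"
    using speed_mono[OF assms order_refl] speed_pos[OF assms] n_pos by (simp add: speed_def)
  then show "2 ^ level_exp k \<le> u n / speed k" and "u n / speed k < 2 ^ (level_exp k + 1)"
    unfolding level_exp_def by (rule floor_log2_bounds)+
qed

lemma block_pos: "0 < block k"
  by (simp add: block_def)

lemma block_dvd: "i \<le> k \<Longrightarrow> k \<le> n \<Longrightarrow> block k dvd block i"
  unfolding block_def level_exp_def
  by (intro le_imp_power_dvd nat_mono floor_mono log_mono divide_left_mono speed_mono)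
    (use speed_pos u_n_pos in auto)

lemma arc_bounds:
  assumes "k \<le> n"
  shows "\<delta> / 16 < arc k" and "arc k \<le> \<delta> / 8"
proof -
  define y where "y = u n / speed k"
  define r where "r = 2 ^ level_exp k / y"
  have "0 < y"
    using speed_pos[OF assms] u_n_pos by (simp add: y_def)
  have arc_eq: "arc k = \<delta> / 8 * r"
    using speed_pos[OF assms] u_n_pos by (simp add: arc_def block_def tick_def r_def y_def field_simps)
  have "1 / 2 < r" and "r \<le> 1"
    using level_exp_bounds[OF assms, folded y_def] \<open>0 < y\<close> by (simp_all add: r_def field_simps)
  then have "\<delta> / 8 * (1 / 2) < \<delta> / 8 * r" and "\<delta> / 8 * r \<le> \<delta> / 8 * 1"
    using \<delta>_pos by (intro mult_strict_left_mono mult_left_mono; simp)+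
  then show "\<delta> / 16 < arc k" and "arc k \<le> \<delta> / 8"
    unfolding arc_eq by linarith+
qed

lemma coarse_block_arc_ge:
  assumes "1 \<le> k" and "k \<le> n"
  shows "16 \<le> real (block (k - D) div block k) * arc k"
proof -
  have k_D: "k - D \<le> n"
    using assms by simp
  have "256 / \<delta> \<le> speed k / speed (k - D)"
    using speed_lacunary[OF assms] speed_pos[OF k_D] \<delta>_pos by (simp add: field_simps)
  then have "\<delta> / 16 * (256 / \<delta>) \<le> arc (k - D) * (speed k / speed (k - D))"
    using arc_bounds[OF k_D] \<delta>_pos by (intro mult_mono) auto
  moreover have "block (k - D) div block k * block k = block (k - D)"
    using block_dvd[of "k - D" k] assms by simp
  then have "arc (k - D) * (speed k / speed (k - D)) = real (block (k - D) div block k) * arc k"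
    using speed_pos[OF k_D] unfolding arc_def by (simp add: field_simps flip: of_nat_mult)
  ultimately show ?thesis
    using \<delta>_pos by simp
qed

lemma survivors_saturated:
  assumes "k \<le> n" and "j \<in> survivors k" and "j' div block k = j div block k"
  shows "j' \<in> survivors k"
proof -
  have "j' div block 0 = j div block 0"
    using div_eq_div_of_dvd[OF block_dvd assms(3), of 0] assms(1) by simp
  also have "\<dots> = 0"
    using assms(2) by (simp add: survivors_def)
  finally have "j' < block 0"
    using block_pos[of 0] by (simp add: div_eq_0_iff)
  moreover have "j' div block i = j div block i" if "i \<in> {1..k}" for i
    using div_eq_div_of_dvd[OF block_dvd assms(3), of i] that assms(1) by simp
  ultimately show ?thesis
    using assms(2) by (simp add: survivors_def)
qed

lemma card_bad_in_block:
  assumes "1 \<le> k" and "k \<le> n"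
  shows "real (card ({j. j div block (k - D) = B} \<inter> {j. bad k (j div block k)}))
    \<le> 3 * \<delta> * block (k - D)"
proof -
  define r where "r = block (k - D) div block k"
  have block_eq: "block (k - D) = block k * r"
    using block_dvd[of "k - D" k] assms by (simp add: r_def)
  then have "0 < r"
    using block_pos[of "k - D"] by simp
  define Bad where "Bad = {b. B * r \<le> b \<and> b < B * r + r \<and> bad k b}"
  have "{j. j div block (k - D) = B} \<inter> {j. bad k (j div block k)} = {j. j div block k \<in> Bad}"
    using \<open>0 < r\<close> by (auto simp: block_eq Bad_def div_mult2_eq div_eq_iff_between)
  moreover have "finite Bad"
    by (rule finite_subset[of _ "{..<B * r + r}"]) (auto simp: Bad_def)
  ultimately have "card ({j. j div block (k - D) = B} \<inter> {j. bad k (j div block k)}) = block k * card Bad"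
    using card_div_preimage[OF block_pos] by simp
  moreover have "real (card Bad) \<le> 3 * \<delta> * r"
    unfolding Bad_def bad_def
    using arc_bounds[OF assms(2)] coarse_block_arc_ge[OF assms] \<delta>_pos \<delta>_small
    by (intro card_blocks_meeting_int_nbhd_le) (auto simp: r_def)
  ultimately show ?thesis
    using block_eq mult_left_mono[of "real (card Bad)" "3 * \<delta> * r" "block k"] by (simp add: ac_simps)
qed

lemma finite_survivors: "finite (survivors k)"
  by (rule finite_subset[of _ "{..<block 0}"]) (auto simp: survivors_def)

lemma survivors_antimono: "i \<le> k \<Longrightarrow> survivors k \<subseteq> survivors i"
  by (auto simp: survivors_def)

lemma survivors_step: "1 \<le> k \<Longrightarrow> survivors k = survivors (k - 1) - {j. bad k (j div block k)}"
proof -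
  assume "1 \<le> k"
  then have "{1..k} = insert k {1..k - 1}"
    by auto
  then show ?thesis
    unfolding survivors_def by (simp only:) blast
qed

lemma card_survivors_loss_le:
  assumes "1 \<le> k" and "k \<le> n"
  shows "real (card (survivors (k - 1) - survivors k)) \<le> 3 * \<delta> * card (survivors (k - D))"
proof -
  define Bad where "Bad = {j. bad k (j div block k)}"
  have "survivors (k - 1) \<subseteq> survivors (k - D)"
    using D_pos by (intro survivors_antimono) simp
  then have "survivors (k - 1) - survivors k \<subseteq> survivors (k - D) \<inter> Bad"
    using survivors_step[OF assms(1)] by (auto simp: Bad_def)
  then have "real (card (survivors (k - 1) - survivors k)) \<le> real (card (survivors (k - D) \<inter> Bad))"
    by (intro of_nat_mono card_mono) (simp_all add: finite_survivors)
  also have "\<dots> \<le> 3 * \<delta> * card (survivors (k - D))"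
  proof (rule card_inter_le_of_sparse_cells[OF block_pos finite_survivors])
    show "j' \<in> survivors (k - D)" if "j \<in> survivors (k - D)" "j' div block (k - D) = j div block (k - D)" for j j'
      using survivors_saturated[of "k - D" j j'] that assms by simp
    show "real (card ({j. j div block (k - D) = B} \<inter> Bad)) \<le> 3 * \<delta> * real (block (k - D))" for B
      unfolding Bad_def by (rule card_bad_in_block[OF assms])
  qed
  finally show ?thesis .
qed

lemma survivors_nonempty: "survivors n \<noteq> {}"
proof -
  define a where "a k = real (card (survivors k))" for k
  have "(1 - 1 / (2 * real D)) ^ n * a 0 \<le> a n"
  proof (rule delayed_loss_geometric_decay[where \<rho> = "3 * \<delta>"])
    show "1 \<le> D" "0 \<le> 3 * \<delta>" "4 * (3 * \<delta>) * D \<le> 1"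
      using D_pos \<delta>_pos \<delta>_D by auto
    show "0 \<le> a k" for k
      by (simp add: a_def)
    show "a k \<le> a i" if "i \<le> k" for i k
      using survivors_antimono[OF that] finite_survivors by (simp add: a_def card_mono)
    show "a (k - 1) - a k \<le> 3 * \<delta> * a (k - D)" if "1 \<le> k" "k \<le> n" for k
    proof -
      have "survivors k \<subseteq> survivors (k - 1)"
        by (rule survivors_antimono) simp
      then have "a (k - 1) - a k = real (card (survivors (k - 1) - survivors k))"
        using card_mono[OF finite_survivors] by (simp add: a_def card_Diff_subset finite_survivors)
      then show ?thesis
        using card_survivors_loss_le[OF that] by (simp add: a_def)
    qed
  qed simp
  moreover have "0 < (1 - 1 / (2 * real D)) ^ n * a 0"
    using D_pos block_pos[of 0] by (simp add: a_def survivors_def field_simps)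
  ultimately show ?thesis
    by (auto simp: a_def)
qed

theorem exists_lonely_time: "\<exists>t. \<forall>k\<in>{1..n}. \<forall>m::int. \<delta> < \<bar>t * u k - m\<bar>"
proof -
  obtain j where j: "j \<in> survivors n"
    using survivors_nonempty by blast
  have "\<delta> < \<bar>real j * tick * u k - m\<bar>" if k: "k \<in> {1..n}" for k and m :: int
  proof (rule ccontr)
    assume "\<not> \<delta> < \<bar>real j * tick * u k - m\<bar>"
    define b where "b = j div block k"
    have "0 \<le> tick * u k"
      using u_pos[of k] u_n_pos \<delta>_pos k by (simp add: tick_def)
    moreover have "real b * block k \<le> real j" "real j \<le> (real b + 1) * block k"
      using div_eq_iff_between[OF block_pos, of j k b] unfolding b_def
      by (simp_all add: algebra_simps flip: of_nat_mult of_nat_add)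
    ultimately have "real b * arc k \<le> real j * tick * u k" "real j * tick * u k \<le> (real b + 1) * arc k"
      using k by (auto simp: arc_def speed_def mult.assoc dest: mult_right_mono)
    moreover have "m - \<delta> \<le> real j * tick * u k" "real j * tick * u k \<le> m + \<delta>"
      using \<open>\<not> \<delta> < \<bar>real j * tick * u k - m\<bar>\<close> by linarith+
    ultimately have "bad k b"
      unfolding bad_def meets_int_nbhd_def by (intro exI[of _ m] conjI) linarith+
    then show False
      using j k by (auto simp: survivors_def b_def)
  qed
  then show ?thesis
    by (intro exI[of _ "real j * tick"]) simp
qed

end

lemma max_loneliness_gt_of_lacunary:
  fixes v :: "nat \<Rightarrow> real" and n h :: nat and w :: real
  assumes "1 \<le> n" and "1 \<le> h" and "256 \<le> w" and "24 * real h \<le> w"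
    and pos: "\<And>i. 1 \<le> i \<Longrightarrow> i \<le> n \<Longrightarrow> 0 < v i"
    and mono: "\<And>i j. 1 \<le> i \<Longrightarrow> i \<le> j \<Longrightarrow> j \<le> n \<Longrightarrow> v i \<le> v j"
    and lacunary: "\<And>i. 1 \<le> i \<Longrightarrow> i + h \<le> n \<Longrightarrow> w * v i \<le> v (i + h)"
  shows "1 / w < max_loneliness n v"
proof -
  interpret lacunary_speeds n "2 * h" v "1 / w"
  proof
    show "1 \<le> n" "1 \<le> 2 * h" "0 < 1 / w" "12 * (1 / w) * real (2 * h) \<le> 1"
      using assms(1-4) by (auto simp: field_simps)
    show "256 * v (k - 2 * h) \<le> 1 / w * v k" if "2 * h < k" "k \<le> n" for k
    proof -
      define i where "i = k - 2 * h"
      have "1 \<le> i" "i \<le> n" and k: "k = i + h + h"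
        using that by (auto simp: i_def)
      then have "w * (w * v i) \<le> w * v (i + h)"
        using lacunary[of i] that \<open>256 \<le> w\<close> by (intro mult_left_mono) auto
      also have "\<dots> \<le> v k"
        using lacunary[of "i + h"] \<open>1 \<le> i\<close> that k by simp
      finally have "w * (w * v i) \<le> v k" .
      moreover have "256 * v i \<le> w * v i"
        using \<open>256 \<le> w\<close> pos[OF \<open>1 \<le> i\<close> \<open>i \<le> n\<close>] by (intro mult_right_mono) auto
      then have "w * (256 * v i) \<le> w * (w * v i)"
        using \<open>256 \<le> w\<close> by (intro mult_left_mono) auto
      ultimately have "w * (256 * v i) \<le> v k"
        by linarith
      then show ?thesis
        using \<open>256 \<le> w\<close> by (simp add: i_def field_simps)
    qed
  qed (use pos mono in auto)
  obtain t where "\<forall>k\<in>{1..n}. \<forall>m::int. 1 / w < \<bar>t * v k - m\<bar>"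
    using exists_lonely_time by blast
  then show ?thesis
    using max_loneliness_gt[OF \<open>1 \<le> n\<close>] by blast
qed

lemma lacunarity_scale_bounds:
  fixes \<alpha> x :: real
  assumes "0 < \<alpha>" and "256 * \<alpha> \<le> x"
  shows "1 \<le> nat \<lfloor>x / (12 * exp 1 * \<alpha>)\<rfloor>" and "256 \<le> x / \<alpha>"
    and "24 * real (nat \<lfloor>x / (12 * exp 1 * \<alpha>)\<rfloor>) \<le> x / \<alpha>"
proof -
  define w where "w = x / \<alpha>"
  define y where "y = w / (12 * exp 1)"
  show "256 \<le> x / \<alpha>"
    using assms by (simp add: field_simps)
  then have "12 * exp 1 \<le> w"
    using exp_le by (simp add: w_def)
  then have "1 \<le> y"
    by (simp add: y_def)
  have "y \<le> w / 24"
    using exp_ge_add_one_self[of 1] \<open>12 * exp 1 \<le> w\<close> unfolding y_def by (intro divide_left_mono) auto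
  have floor_eq: "\<lfloor>x / (12 * exp 1 * \<alpha>)\<rfloor> = \<lfloor>y\<rfloor>"
    by (simp add: y_def w_def divide_divide_eq_left mult.commute)
  show "1 \<le> nat \<lfloor>x / (12 * exp 1 * \<alpha>)\<rfloor>"
    unfolding floor_eq using nat_mono[of 1 "\<lfloor>y\<rfloor>"] \<open>1 \<le> y\<close> by simp
  have "real (nat \<lfloor>y\<rfloor>) \<le> y"
    using \<open>1 \<le> y\<close> by simp
  then show "24 * real (nat \<lfloor>x / (12 * exp 1 * \<alpha>)\<rfloor>) \<le> x / \<alpha>"
    unfolding floor_eq w_def[symmetric] using \<open>y \<le> w / 24\<close> by linarith
qed

theorem theorem12p7:
  fixes c :: int and \<alpha> :: real
  assumes "\<alpha> > 0"
  shows "\<forall>\<^sub>F n in sequentially.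
    \<forall>v :: nat \<Rightarrow> real.
      (let h = nat \<lfloor>(real n + real_of_int c) / (12 * exp 1 * \<alpha>)\<rfloor>;
           w = (real n + real_of_int c) / \<alpha>
       in ((\<forall>i\<in>{1..n}. v i > 0) \<and>
           (\<forall>i j. 1 \<le> i \<longrightarrow> i < j \<longrightarrow> j \<le> n \<longrightarrow> v i < v j) \<and>
           (\<forall>i. 1 \<le> i \<longrightarrow> i + h \<le> n \<longrightarrow> v (i + h) \<ge> w * v i))
          \<longrightarrow> max_loneliness n v > \<alpha> / (real n + real_of_int c))"
proof -
  have "\<forall>\<^sub>F n in sequentially. 256 * \<alpha> - c \<le> real n"
    using filterlim_real_sequentially unfolding filterlim_at_top by blast
  moreover have "\<forall>\<^sub>F n in sequentially. 1 \<le> n"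
    by (rule eventually_ge_at_top)
  ultimately show ?thesis
    unfolding Let_def
  proof eventually_elim
    case (elim n)
    then have "1 \<le> n" and "256 * \<alpha> \<le> real n + c"
      by auto
    note scales = lacunarity_scale_bounds[OF assms this(2)]
    show ?case
      using max_loneliness_gt_of_lacunary[OF \<open>1 \<le> n\<close> scales] assms by (fastforce simp: le_less)
  qed
qed

end
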